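(* Let $S$ be a random subset of a finite set $L$ and $T$ a random subset of a finite set $R$, and let $(l,r)\in L\times R$. Suppose that all events $\{l'\in S\}$ for $l'\ne l$ and all events $\{r'\in T\}$ for $r'\ne r$ are jointly independent of the event $\{(l,r)\in S\times T\}$. Let $s$ be an element of $S$ chosen uniformly at random and $t$ an element of $T$ chosen uniformly at random ($(s,t)$ is undefined if $S=\varnothing$ or $T=\varnothing$). Then $$\Pr[(l,r)=(s,t)]\ge\frac{\Pr[(l,r)\in S\times T]}{(\mathbb{E}[|S|]+1)(\mathbb{E}[|T|]+1)}.$$ *)

theory Defs
  imports "HOL-Probability.Probability"
begin

definition choose_pair :: "('a set \<times> 'b set) pmf \<Rightarrow> ('a \<times> 'b) option pmf" where
  "choose_pair D = bind_pmf D (\<lambda>(S, T).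
     if S = {} \<or> T = {} then return_pmf None
     else map_pmf Some (pair_pmf (pmf_of_set S) (pmf_of_set T)))"

end

theory Submission imports Defs begin

text \<open>If \<open>l \<in> S\<close> and \<open>r \<in> T\<close>, the uniform choice hits \<open>(l, r)\<close> with probability
  \<open>1 / ((|S - {l}| + 1) (|T - {r}| + 1))\<close>. This is a function of \<open>(S - {l}, T - {r})\<close>, hence
  independent of the event \<open>(l, r) \<in> S \<times> T\<close>, so the probability of \<open>(s, t) = (l, r)\<close> factors as
  \<open>Pr[(l, r) \<in> S \<times> T]\<close> times the expectation of that quantity. As \<open>1/(xy)\<close> is convex on the
  positive quadrant, Jensen's inequality bounds the expectation from below by
  \<open>1 / ((E|S - {l}| + 1) (E|T - {r}| + 1)) \<ge> 1 / ((E|S| + 1) (E|T| + 1))\<close>.\<close>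

lemma inverse_mult_tangent_plane:
  fixes x y a b :: real
  assumes "x > 0" "y > 0" "a > 0" "b > 0"
  shows "(3 - x / a - y / b) / (a * b) \<le> 1 / (x * y)"
proof -
  define u v where "u = x / a" and "v = y / b"
  have uv: "u > 0" "v > 0" using assms by (simp_all add: u_def v_def)
  define t where "t = sqrt (u * v)"
  have t: "t > 0" "t * t = u * v" using uv by (simp_all add: t_def)
  have "2 * t \<le> u + v"
  proof -
    have "0 \<le> (sqrt u - sqrt v)\<^sup>2" by simp
    then show ?thesis using uv by (simp add: t_def power2_eq_square algebra_simps real_sqrt_mult)
  qed
  then have "u * v * (2 * t) \<le> u * v * (u + v)" using uv by (intro mult_left_mono) auto
  moreover have "1 + u * v * (2 * t) - 3 * (u * v) = (t - 1)\<^sup>2 * (2 * t + 1)"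
    by (simp add: t(2)[symmetric] power2_eq_square algebra_simps)
  moreover have "0 \<le> (t - 1)\<^sup>2 * (2 * t + 1)" using t by simp
  \<comment> \<open>AM-GM for the three numbers \<open>1, u\<^sup>2v, uv\<^sup>2\<close>, whose geometric mean is \<open>uv\<close>\<close>
  ultimately have "3 * (u * v) \<le> 1 + u * u * v + u * v * v" by (simp add: algebra_simps)
  then have "3 - u - v \<le> 1 / (u * v)" using uv by (simp add: field_simps)
  then have "(3 - u - v) / (a * b) \<le> 1 / (u * v) / (a * b)"
    using assms by (intro divide_right_mono) auto
  also have "1 / (u * v) / (a * b) = 1 / (x * y)" using assms by (simp add: u_def v_def)
  finally show ?thesis by (simp add: u_def v_def)
qed

lemma (in prob_space) expectation_pos:
  fixes X :: "'a \<Rightarrow> real"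
  assumes "integrable M X" and "\<And>\<omega>. \<omega> \<in> space M \<Longrightarrow> X \<omega> > 0"
  shows "expectation X > 0"
proof -
  have "AE \<omega> in M. 0 \<le> X \<omega>" using assms(2) by (intro AE_I2) (simp add: less_imp_le)
  moreover have "\<not> (AE \<omega> in M. X \<omega> = 0)"
  proof
    assume "AE \<omega> in M. X \<omega> = 0"
    with AE_space have "AE \<omega> in M. False" by eventually_elim (use assms(2) in fastforce)
    then show False by simp
  qed
  ultimately show ?thesis using assms(1)
    by (metis integral_nonneg_AE integral_nonneg_eq_0_iff_AE order_le_less)
qed

lemma (in prob_space) inverse_mult_expectation_le:
  fixes X Y :: "'a \<Rightarrow> real"
  assumes X: "integrable M X" "\<And>\<omega>. \<omega> \<in> space M \<Longrightarrow> X \<omega> > 0"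
    and Y: "integrable M Y" "\<And>\<omega>. \<omega> \<in> space M \<Longrightarrow> Y \<omega> > 0"
    and XY: "integrable M (\<lambda>\<omega>. 1 / (X \<omega> * Y \<omega>))"
  shows "1 / (expectation X * expectation Y) \<le> expectation (\<lambda>\<omega>. 1 / (X \<omega> * Y \<omega>))"
proof -
  define a b where "a = expectation X" and "b = expectation Y"
  have ab: "a > 0" "b > 0" using expectation_pos X Y by (simp_all add: a_def b_def)
  \<comment> \<open>the tangent plane of the convex function \<open>1/(xy)\<close> at \<open>(a, b)\<close>\<close>
  define tangent where "tangent = (\<lambda>\<omega>. (3 - X \<omega> / a - Y \<omega> / b) / (a * b))"
  have "expectation tangent = (3 - a / a - b / b) / (a * b)"
    using X(1) Y(1) by (simp add: tangent_def a_def b_def prob_space)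
  also have "\<dots> = 1 / (a * b)" using ab by simp
  finally have "1 / (a * b) = expectation tangent" ..
  also have "\<dots> \<le> expectation (\<lambda>\<omega>. 1 / (X \<omega> * Y \<omega>))"
    using X Y XY ab by (intro integral_mono) (auto simp: tangent_def intro: inverse_mult_tangent_plane)
  finally show ?thesis by (simp add: a_def b_def)
qed

lemma measure_pmf_prob_finite_support:
  assumes "finite (set_pmf D)"
  shows "measure_pmf.prob D A = (\<Sum>\<omega> \<in> set_pmf D \<inter> A. pmf D \<omega>)"
proof -
  have "measure_pmf.prob D A = measure_pmf.prob D (A \<inter> set_pmf D)"
    by (simp add: measure_Int_set_pmf)
  also have "\<dots> = (\<Sum>\<omega> \<in> A \<inter> set_pmf D. pmf D \<omega>)"
    using assms by (intro measure_measure_pmf_finite) auto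
  finally show ?thesis by (simp add: Int_commute)
qed

lemma expectation_indicator_mult_indep:
  fixes D :: "'a pmf" and g :: "'a \<Rightarrow> 'b" and h :: "'b \<Rightarrow> real"
  assumes fin: "finite (set_pmf D)"
    and indep: "prob_space.indep_set (measure_pmf D) {g -` Y | Y. True} {A}"
  shows "measure_pmf.expectation D (\<lambda>\<omega>. indicator A \<omega> * h (g \<omega>)) =
           measure_pmf.prob D A * measure_pmf.expectation D (\<lambda>\<omega>. h (g \<omega>))"
proof -
  define U where "U = set_pmf D"
  define fibre where "fibre y = {\<omega> \<in> U. g \<omega> = y}" for y
  have fibre_prob: "measure_pmf.prob D (g -` {y}) = (\<Sum>\<omega> \<in> fibre y. pmf D \<omega>)" for y
    using fin by (auto simp: measure_pmf_prob_finite_support fibre_def U_def intro!: sum.cong)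
  have fibre_prob_A: "measure_pmf.prob D (g -` {y} \<inter> A) =
      (\<Sum>\<omega> \<in> fibre y. pmf D \<omega> * indicator A \<omega>)" for y
    using fin by (auto simp: measure_pmf_prob_finite_support fibre_def U_def indicator_def
        sum.If_cases intro!: sum.cong)
  have fibre_indep: "(\<Sum>\<omega> \<in> fibre y. pmf D \<omega> * indicator A \<omega>) =
      measure_pmf.prob D A * (\<Sum>\<omega> \<in> fibre y. pmf D \<omega>)" for y
  proof -
    have "measure_pmf.prob D (g -` {y} \<inter> A) = measure_pmf.prob D (g -` {y}) * measure_pmf.prob D A"
      using indep by (intro prob_space.indep_setD[OF prob_space_measure_pmf]) auto
    then show ?thesis by (simp add: fibre_prob fibre_prob_A)
  qed
  have expectation_fibres: "measure_pmf.expectation D f =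
      (\<Sum>y \<in> g ` U. \<Sum>\<omega> \<in> fibre y. pmf D \<omega> * f \<omega>)" for f :: "'a \<Rightarrow> real"
    using fin unfolding fibre_def U_def
    by (subst integral_measure_pmf[OF fin]) (auto intro: sum.group[symmetric])
  have "measure_pmf.expectation D (\<lambda>\<omega>. indicator A \<omega> * h (g \<omega>)) =
      (\<Sum>y \<in> g ` U. h y * (\<Sum>\<omega> \<in> fibre y. pmf D \<omega> * indicator A \<omega>))"
    by (auto simp: expectation_fibres sum_distrib_left fibre_def mult_ac intro!: sum.cong)
  also have "\<dots> = (\<Sum>y \<in> g ` U. measure_pmf.prob D A * (h y * (\<Sum>\<omega> \<in> fibre y. pmf D \<omega>)))"
    by (simp only: fibre_indep) (simp add: mult_ac)
  also have "\<dots> = measure_pmf.prob D A * (\<Sum>y \<in> g ` U. \<Sum>\<omega> \<in> fibre y. pmf D \<omega> * h (g \<omega>))"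
    by (auto simp: sum_distrib_left fibre_def mult_ac intro!: sum.cong)
  also have "\<dots> = measure_pmf.prob D A * measure_pmf.expectation D (\<lambda>\<omega>. h (g \<omega>))"
    by (simp add: expectation_fibres)
  finally show ?thesis .
qed

lemma expectation_card_Diff_singleton_le:
  fixes D :: "'a pmf" and F :: "'a \<Rightarrow> 'b set"
  assumes "finite (set_pmf D)"
  shows "measure_pmf.expectation D (\<lambda>\<omega>. real (card (F \<omega> - {x})) + 1) \<le>
           measure_pmf.expectation D (\<lambda>\<omega>. real (card (F \<omega>))) + 1"
proof -
  have integrable: "integrable (measure_pmf D) f" for f :: "'a \<Rightarrow> real"
    using assms by (rule integrable_measure_pmf_finite)
  have "measure_pmf.expectation D (\<lambda>\<omega>. real (card (F \<omega> - {x})) + 1) \<le>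
      measure_pmf.expectation D (\<lambda>\<omega>. real (card (F \<omega>)) + 1)"
    using integrable by (intro integral_mono) (auto simp: card_Diff1_le)
  also have "\<dots> = measure_pmf.expectation D (\<lambda>\<omega>. real (card (F \<omega>))) + 1"
    using integrable by (simp add: measure_pmf.prob_space)
  finally show ?thesis .
qed

lemma pmf_choose_pair_Some:
  assumes "\<forall>(S, T) \<in> set_pmf D. finite S \<and> finite T"
  shows "pmf (choose_pair D) (Some (l, r)) =
           measure_pmf.expectation D (\<lambda>(S, T).
             if l \<in> S \<and> r \<in> T
             then 1 / ((real (card (S - {l})) + 1) * (real (card (T - {r})) + 1)) else 0)"
proof -
  have pointwise: "pmf (if S = {} \<or> T = {} then return_pmf None
        else map_pmf Some (pair_pmf (pmf_of_set S) (pmf_of_set T))) (Some (l, r)) =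
      (if l \<in> S \<and> r \<in> T
       then 1 / ((real (card (S - {l})) + 1) * (real (card (T - {r})) + 1)) else 0)"
    if fin: "finite S" "finite T" for S :: "'a set" and T :: "'b set"
  proof (cases "l \<in> S \<and> r \<in> T")
    case True
    then have "card S = card (S - {l}) + 1" "card T = card (T - {r}) + 1"
      using fin by (metis Suc_eq_plus1 card_Suc_Diff1)+
    with True fin show ?thesis by (auto simp: pmf_map_inj' pmf_pair)
  next
    case False
    with fin show ?thesis by (auto simp: pmf_map_inj' pmf_pair)
  qed
  show ?thesis
    unfolding choose_pair_def pmf_bind
    using assms by (intro integral_cong_AE AE_pmfI) (auto simp: pointwise)
qed

lemma pmf_choose_pair_Some_indep:
  fixes D :: "('a set \<times> 'b set) pmf"
  assumes "finite (set_pmf D)" and "\<forall>(S, T) \<in> set_pmf D. finite S \<and> finite T"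
    and "prob_space.indep_set (measure_pmf D)
           {(\<lambda>(S, T). (S - {l}, T - {r})) -` Y | Y. True}
           {{(S, T). l \<in> S \<and> r \<in> T}}"
  shows "pmf (choose_pair D) (Some (l, r)) =
           measure_pmf.prob D {(S, T). l \<in> S \<and> r \<in> T} *
           measure_pmf.expectation D (\<lambda>(S, T).
             1 / ((real (card (S - {l})) + 1) * (real (card (T - {r})) + 1)))"
proof -
  define g :: "'a set \<times> 'b set \<Rightarrow> 'a set \<times> 'b set" where "g = (\<lambda>(S, T). (S - {l}, T - {r}))"
  define h :: "'a set \<times> 'b set \<Rightarrow> real"
    where "h = (\<lambda>(S', T'). 1 / ((real (card S') + 1) * (real (card T') + 1)))"
  have "pmf (choose_pair D) (Some (l, r)) =
      measure_pmf.expectation D (\<lambda>\<omega>. indicator {(S, T). l \<in> S \<and> r \<in> T} \<omega> * h (g \<omega>))"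
    unfolding pmf_choose_pair_Some[OF assms(2)]
    by (intro arg_cong[where f = "measure_pmf.expectation D"]) (auto simp: fun_eq_iff h_def g_def)
  also have "\<dots> = measure_pmf.prob D {(S, T). l \<in> S \<and> r \<in> T} *
      measure_pmf.expectation D (\<lambda>\<omega>. h (g \<omega>))"
    unfolding g_def by (rule expectation_indicator_mult_indep[OF assms(1,3)])
  also have "(\<lambda>\<omega>. h (g \<omega>)) =
      (\<lambda>(S, T). 1 / ((real (card (S - {l})) + 1) * (real (card (T - {r})) + 1)))"
    by (auto simp: fun_eq_iff h_def g_def)
  finally show ?thesis .
qed

lemma inverse_mult_expectation_card_le:
  fixes D :: "('a set \<times> 'b set) pmf"
  assumes fin: "finite (set_pmf D)"
  shows "1 / ((measure_pmf.expectation D (\<lambda>(S, T). real (card S)) + 1) *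
              (measure_pmf.expectation D (\<lambda>(S, T). real (card T)) + 1)) \<le>
           measure_pmf.expectation D (\<lambda>(S, T).
             1 / ((real (card (S - {l})) + 1) * (real (card (T - {r})) + 1)))"
proof -
  define X :: "'a set \<times> 'b set \<Rightarrow> real" where "X \<omega> = real (card (fst \<omega> - {l})) + 1" for \<omega>
  define Y :: "'a set \<times> 'b set \<Rightarrow> real" where "Y \<omega> = real (card (snd \<omega> - {r})) + 1" for \<omega>
  have integrable: "integrable (measure_pmf D) f" for f :: "'a set \<times> 'b set \<Rightarrow> real"
    using fin by (rule integrable_measure_pmf_finite)
  have X_pos: "X \<omega> > 0" and Y_pos: "Y \<omega> > 0" for \<omega>
    by (simp_all add: X_def Y_def)
  have "measure_pmf.expectation D X > 0" "measure_pmf.expectation D Y > 0"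
    using integrable X_pos Y_pos by (blast intro: measure_pmf.expectation_pos)+
  moreover have "measure_pmf.expectation D X \<le> measure_pmf.expectation D (\<lambda>(S, T). real (card S)) + 1"
    and "measure_pmf.expectation D Y \<le> measure_pmf.expectation D (\<lambda>(S, T). real (card T)) + 1"
    using expectation_card_Diff_singleton_le[OF fin]
    by (simp_all add: X_def[abs_def] Y_def[abs_def] case_prod_unfold)
  ultimately have "1 / ((measure_pmf.expectation D (\<lambda>(S, T). real (card S)) + 1) *
        (measure_pmf.expectation D (\<lambda>(S, T). real (card T)) + 1)) \<le>
      1 / (measure_pmf.expectation D X * measure_pmf.expectation D Y)"
    by (simp add: divide_left_mono mult_mono)
  also have "\<dots> \<le> measure_pmf.expectation D (\<lambda>\<omega>. 1 / (X \<omega> * Y \<omega>))"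
    using integrable X_pos Y_pos by (intro measure_pmf.inverse_mult_expectation_le) auto
  finally show ?thesis by (simp add: X_def Y_def case_prod_unfold)
qed

theorem mainTheorem10:
  fixes D :: "('a set \<times> 'b set) pmf" and L :: "'a set" and R :: "'b set"
    and l :: 'a and r :: 'b
  assumes "finite L" and "finite R"
    and "\<forall>(S, T) \<in> set_pmf D. S \<subseteq> L \<and> T \<subseteq> R"
    and "l \<in> L" and "r \<in> R"
    and "prob_space.indep_set (measure_pmf D)
           {(\<lambda>(S, T). (S - {l}, T - {r})) -` Y | Y. True}
           {{(S, T). l \<in> S \<and> r \<in> T}}"
  shows "measure_pmf.prob (choose_pair D) {Some (l, r)} \<ge>
           measure_pmf.prob D {(S, T). l \<in> S \<and> r \<in> T} /
           ((measure_pmf.expectation D (\<lambda>(S, T). real (card S)) + 1) *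
            (measure_pmf.expectation D (\<lambda>(S, T). real (card T)) + 1))"
proof -
  have "set_pmf D \<subseteq> Pow L \<times> Pow R" using assms(3) by auto
  then have fin_support: "finite (set_pmf D)" by (rule finite_subset) (simp add: assms(1,2))
  have fin_sets: "\<forall>(S, T) \<in> set_pmf D. finite S \<and> finite T"
  proof clarify
    fix S T assume "(S, T) \<in> set_pmf D"
    with assms(3) have "S \<subseteq> L" "T \<subseteq> R" by auto
    with assms(1,2) show "finite S \<and> finite T" by (auto intro: finite_subset)
  qed
  from mult_left_mono[OF inverse_mult_expectation_card_le[OF fin_support, of l r] measure_nonneg]
  show ?thesis
    by (simp add: measure_pmf_single pmf_choose_pair_Some_indep[OF fin_support fin_sets assms(6)])
qed

end
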